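(* Let $\varepsilon>0$ and let $\mathbb{F}$ be a field with $|\mathbb{F}|\ge n^2$. There exists a polynomial map $P : \mathbb{F}^{\lfloor 4 \varepsilon n^2\rfloor} \to \mathbb{F}^{n \times n}$, each of whose coordinates is a polynomial of degree at most $n^2$, such that every matrix $M\in\mathbb{F}^{n\times n}$ which is not $(\varepsilon n, \varepsilon n^2)$-rigid lies in the image of $P$.
   Context: A matrix $M\in\mathbb{F}^{n\times n}$ is $(r,s)$-rigid if $M$ cannot be written as $M=R+S$ with $\mathrm{rank}(R)\le r$ and $S$ having at most $s$ non-zero entries. *)

theory Defs
  imports "Jordan_Normal_Form.DL_Rank"
begin

definition rigid :: "nat \<Rightarrow> real \<Rightarrow> real \<Rightarrow> 'a::field mat \<Rightarrow> bool" where
  "rigid n r s M \<longleftrightarrow>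
     \<not> (\<exists>R S. R \<in> carrier_mat n n \<and> S \<in> carrier_mat n n \<and> M = R + S \<and>
            real (vec_space.rank n R) \<le> r \<and>
            real (card {(i,j). i < n \<and> j < n \<and> S $$ (i,j) \<noteq> 0}) \<le> s)"

definition is_poly_fun :: "nat \<Rightarrow> nat \<Rightarrow> ('a::comm_ring_1 vec \<Rightarrow> 'a) \<Rightarrow> bool" where
  "is_poly_fun m d f \<longleftrightarrow>
     (\<exists>(S :: (nat \<Rightarrow> nat) set) (c :: (nat \<Rightarrow> nat) \<Rightarrow> 'a).
        finite S \<and>
        (\<forall>\<alpha>\<in>S. (\<forall>i. m \<le> i \<longrightarrow> \<alpha> i = 0) \<and> (\<Sum>i<m. \<alpha> i) \<le> d) \<and>
        (\<forall>x\<in>carrier_vec m. f x = (\<Sum>\<alpha>\<in>S. c \<alpha> * (\<Prod>i<m. (x $ i) ^ \<alpha> i))))"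

end

theory Submission
  imports Defs
begin

(* A matrix that is not (eps n, eps n^2)-rigid is R + S with rank R <= k = floor (eps n) and
   at most s = floor (eps n^2) non-zero entries in S. Factor R = B C with B of size n x k and C of
   size k x n: the entries of R are bilinear in the 2nk entries of B and C. Encode S by s pairs
   (p, v) of field elements: label the n^2 positions by distinct elements e_0, ..., e_(n^2-1)
   (this is where |F| >= n^2 is used), so that the Lagrange basis polynomial L_(i,j) of degree
   n^2 - 1 selects a position, and S(i,j) = sum_t v_t L_(i,j)(p_t). This uses 2nk + 2s <= 4 eps n^2
   parameters and degree at most n^2. If 4 eps >= 1, the n^2 entries themselves already fit into
   the parameter budget. *)

abbreviation monomial_vec :: "nat \<Rightarrow> (nat \<Rightarrow> nat) \<Rightarrow> 'a::comm_ring_1 vec \<Rightarrow> 'a" where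
  "monomial_vec m \<alpha> x \<equiv> (\<Prod>i<m. (x $ i) ^ \<alpha> i)"

lemma is_poly_funE:
  assumes "is_poly_fun m d f"
  obtains S c where "finite S" "\<forall>\<alpha>\<in>S. (\<forall>i. m \<le> i \<longrightarrow> \<alpha> i = 0) \<and> (\<Sum>i<m. \<alpha> i) \<le> d"
    "\<forall>x\<in>carrier_vec m. f x = (\<Sum>\<alpha>\<in>S. c \<alpha> * monomial_vec m \<alpha> x)"
  using assms unfolding is_poly_fun_def by blast

lemma is_poly_fun_mono: "is_poly_fun m d f \<Longrightarrow> d \<le> d' \<Longrightarrow> is_poly_fun m d' f"
  unfolding is_poly_fun_def by (meson order_trans)

lemma is_poly_fun_const: "is_poly_fun m d (\<lambda>x. c)"
  unfolding is_poly_fun_def by (intro exI[of _ "{\<lambda>_. 0}"] exI[of _ "\<lambda>_. c"]) auto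

lemma is_poly_fun_coord:
  assumes "i < m" "1 \<le> d"
  shows "is_poly_fun m d (\<lambda>x. x $ i)"
proof -
  define \<alpha> where "\<alpha> = (\<lambda>j. if j = i then 1 else (0::nat))"
  have "monomial_vec m \<alpha> x = (\<Prod>j<m. if j = i then x $ j else 1)" for x :: "'a vec"
    by (rule prod.cong) (auto simp: \<alpha>_def)
  then have "monomial_vec m \<alpha> x = x $ i" for x :: "'a vec"
    using assms(1) by simp
  moreover have "(\<Sum>j<m. \<alpha> j) = 1"
    using assms(1) by (simp add: \<alpha>_def)
  ultimately show ?thesis
    unfolding is_poly_fun_def
    by (intro exI[of _ "{\<alpha>}"] exI[of _ "\<lambda>_. 1"]) (use assms in \<open>auto simp: \<alpha>_def\<close>)
qed

lemma is_poly_fun_add: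
  assumes "is_poly_fun m d f" "is_poly_fun m d g"
  shows "is_poly_fun m d (\<lambda>x. f x + g x)"
proof -
  obtain S1 c1 where S1: "finite S1" "\<forall>\<alpha>\<in>S1. (\<forall>i. m \<le> i \<longrightarrow> \<alpha> i = 0) \<and> (\<Sum>i<m. \<alpha> i) \<le> d"
    and f: "\<forall>x\<in>carrier_vec m. f x = (\<Sum>\<alpha>\<in>S1. c1 \<alpha> * monomial_vec m \<alpha> x)"
    using assms(1) by (rule is_poly_funE)
  obtain S2 c2 where S2: "finite S2" "\<forall>\<alpha>\<in>S2. (\<forall>i. m \<le> i \<longrightarrow> \<alpha> i = 0) \<and> (\<Sum>i<m. \<alpha> i) \<le> d"
    and g: "\<forall>x\<in>carrier_vec m. g x = (\<Sum>\<alpha>\<in>S2. c2 \<alpha> * monomial_vec m \<alpha> x)"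
    using assms(2) by (rule is_poly_funE)
  define c where "c \<alpha> = (if \<alpha> \<in> S1 then c1 \<alpha> else 0) + (if \<alpha> \<in> S2 then c2 \<alpha> else 0)" for \<alpha>
  have extend: "(\<Sum>\<alpha>\<in>S1 \<union> S2. (if \<alpha> \<in> S then a \<alpha> else 0) * b \<alpha>) = (\<Sum>\<alpha>\<in>S. a \<alpha> * b \<alpha>)"
    if "S \<subseteq> S1 \<union> S2" for S and a b :: "(nat \<Rightarrow> nat) \<Rightarrow> 'a"
    using S1(1) S2(1) that by (intro sum.mono_neutral_cong_right) auto
  have "(\<Sum>\<alpha>\<in>S1 \<union> S2. c \<alpha> * monomial_vec m \<alpha> x) =
      (\<Sum>\<alpha>\<in>S1. c1 \<alpha> * monomial_vec m \<alpha> x) + (\<Sum>\<alpha>\<in>S2. c2 \<alpha> * monomial_vec m \<alpha> x)" for x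
    unfolding c_def distrib_right sum.distrib by (simp only: extend Un_upper1 Un_upper2)
  then show ?thesis
    unfolding is_poly_fun_def using S1 S2 f g
    by (intro exI[of _ "S1 \<union> S2"] exI[of _ c]) auto
qed

lemma is_poly_fun_mult:
  assumes "is_poly_fun m d1 f" "is_poly_fun m d2 g"
  shows "is_poly_fun m (d1 + d2) (\<lambda>x. f x * g x)"
proof -
  obtain S1 c1 where S1: "finite S1" "\<forall>\<alpha>\<in>S1. (\<forall>i. m \<le> i \<longrightarrow> \<alpha> i = 0) \<and> (\<Sum>i<m. \<alpha> i) \<le> d1"
    and f: "\<forall>x\<in>carrier_vec m. f x = (\<Sum>\<alpha>\<in>S1. c1 \<alpha> * monomial_vec m \<alpha> x)"
    using assms(1) by (rule is_poly_funE)
  obtain S2 c2 where S2: "finite S2" "\<forall>\<alpha>\<in>S2. (\<forall>i. m \<le> i \<longrightarrow> \<alpha> i = 0) \<and> (\<Sum>i<m. \<alpha> i) \<le> d2"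
    and g: "\<forall>x\<in>carrier_vec m. g x = (\<Sum>\<alpha>\<in>S2. c2 \<alpha> * monomial_vec m \<alpha> x)"
    using assms(2) by (rule is_poly_funE)
  define h where "h p = (\<lambda>i. fst p i + snd p i)" for p :: "(nat \<Rightarrow> nat) \<times> (nat \<Rightarrow> nat)"
  define T where "T = h ` (S1 \<times> S2)"
  define c where "c \<gamma> = (\<Sum>p\<in>{p\<in>S1 \<times> S2. h p = \<gamma>}. c1 (fst p) * c2 (snd p))" for \<gamma>
  have fin: "finite (S1 \<times> S2)"
    using S1(1) S2(1) by simp
  have monomial_h: "monomial_vec m (h p) x = monomial_vec m (fst p) x * monomial_vec m (snd p) x"
    for p and x :: "'a vec"
    unfolding h_def by (simp add: power_add prod.distrib)
  have "f x * g x = (\<Sum>\<gamma>\<in>T. c \<gamma> * monomial_vec m \<gamma> x)" if "x \<in> carrier_vec m" for x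
  proof -
    have "f x * g x = (\<Sum>\<alpha>\<in>S1. \<Sum>\<beta>\<in>S2. (c1 \<alpha> * monomial_vec m \<alpha> x) * (c2 \<beta> * monomial_vec m \<beta> x))"
      using f g that by (simp add: sum_product)
    also have "\<dots> = (\<Sum>p\<in>S1 \<times> S2. c1 (fst p) * c2 (snd p) * monomial_vec m (h p) x)"
      unfolding sum.cartesian_product monomial_h by (rule sum.cong) (auto simp: ac_simps)
    also have "\<dots> = (\<Sum>\<gamma>\<in>T. \<Sum>p\<in>{p\<in>S1 \<times> S2. h p = \<gamma>}. c1 (fst p) * c2 (snd p) * monomial_vec m (h p) x)"
      unfolding T_def by (rule sum.image_gen[OF fin])
    also have "\<dots> = (\<Sum>\<gamma>\<in>T. c \<gamma> * monomial_vec m \<gamma> x)"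
      unfolding c_def sum_distrib_right by (intro sum.cong) auto
    finally show ?thesis .
  qed
  moreover have "(\<forall>i. m \<le> i \<longrightarrow> \<gamma> i = 0) \<and> (\<Sum>i<m. \<gamma> i) \<le> d1 + d2" if "\<gamma> \<in> T" for \<gamma>
    using that S1(2) S2(2) unfolding T_def h_def by (auto simp: sum.distrib add_mono)
  ultimately show ?thesis
    unfolding is_poly_fun_def using fin T_def by (intro exI[of _ T] exI[of _ c]) auto
qed

lemma is_poly_fun_sum:
  assumes "finite I" "\<And>t. t \<in> I \<Longrightarrow> is_poly_fun m d (f t)"
  shows "is_poly_fun m d (\<lambda>x. \<Sum>t\<in>I. f t x)"
  using assms by (induction I rule: finite_induct) (auto intro: is_poly_fun_add is_poly_fun_const)

lemma is_poly_fun_prod: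
  assumes "finite I" "\<And>t. t \<in> I \<Longrightarrow> is_poly_fun m (d t) (f t)"
  shows "is_poly_fun m (\<Sum>t\<in>I. d t) (\<lambda>x. \<Prod>t\<in>I. f t x)"
  using assms by (induction I rule: finite_induct) (auto intro: is_poly_fun_mult is_poly_fun_const)

definition lagrange_basis :: "(nat \<Rightarrow> 'a::field) \<Rightarrow> nat \<Rightarrow> nat \<Rightarrow> 'a \<Rightarrow> 'a" where
  "lagrange_basis e N p y = (\<Prod>q\<in>{..<N} - {p}. (y - e q) / (e p - e q))"

lemma lagrange_basis_node:
  assumes inj: "inj_on e {..<N}" and "p < N" "q < N"
  shows "lagrange_basis e N p (e q) = (if q = p then 1 else 0)"
proof (cases "q = p")
  case True
  have "(e p - e r) / (e p - e r) = 1" if "r \<in> {..<N} - {p}" for r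
    using that inj \<open>p < N\<close> by (auto simp: inj_on_def)
  then show ?thesis
    using True unfolding lagrange_basis_def by simp
next
  case False
  then show ?thesis
    unfolding lagrange_basis_def using \<open>q < N\<close> by (auto intro: prod_zero)
qed

lemma is_poly_fun_lagrange_basis:
  assumes "u < m" "p < N"
  shows "is_poly_fun m (N - 1) (\<lambda>x. lagrange_basis e N p (x $ u))"
proof -
  have "is_poly_fun m (1 + 0) (\<lambda>x. (x $ u + - e q) * inverse (e p - e q))" for q
    by (intro is_poly_fun_mult is_poly_fun_add is_poly_fun_coord is_poly_fun_const assms) auto
  then have "is_poly_fun m (\<Sum>q\<in>{..<N} - {p}. 1)
      (\<lambda>x. \<Prod>q\<in>{..<N} - {p}. (x $ u - e q) / (e p - e q))"
    by (intro is_poly_fun_prod) (simp_all add: divide_inverse)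
  then show ?thesis
    using assms(2) unfolding lagrange_basis_def by simp
qed

lemma ex_inj_on_lessThan:
  assumes "infinite (UNIV :: 'a set) \<or> N \<le> card (UNIV :: 'a set)"
  shows "\<exists>e :: nat \<Rightarrow> 'a. inj_on e {..<N}"
proof -
  obtain A :: "'a set" where A: "finite A" "card A = N"
    using assms infinite_arbitrarily_large obtain_subset_with_card_n by metis
  then obtain e where "bij_betw e {..<N} A"
    using ex_bij_betw_nat_finite lessThan_atLeast0 by metis
  then show ?thesis
    by (auto simp: bij_betw_def)
qed

lemma (in vec_space) col_in_span_maximal_indpt:
  assumes A: "A \<in> carrier_mat n nc"
    and S: "maximal S (\<lambda>T. T \<subseteq> set (cols A) \<and> lin_indpt T)"
    and j: "j < nc"
  shows "col A j \<in> span S"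
proof (rule ccontr)
  assume not_in: "col A j \<notin> span S"
  have cols: "set (cols A) \<subseteq> carrier_vec n"
    using A cols_dim by blast
  have S_cols: "S \<subseteq> set (cols A)" and S_indpt: "lin_indpt S"
    using S unfolding maximal_def by auto
  have col_A: "col A j \<in> set (cols A)"
    using A j by (simp add: cols_def)
  have new: "col A j \<notin> S"
    using not_in span_mem S_cols cols by blast
  then have "lin_indpt (insert (col A j) S)"
    using lin_dep_iff_in_span[of S "col A j"] S_indpt S_cols cols col_A not_in by auto
  then have "insert (col A j) S = S"
    using S col_A unfolding maximal_def by blast
  with new show False
    by blast
qed

lemma (in vec_space) rank_factorization:
  assumes A: "A \<in> carrier_mat n nc" and rank: "rank A \<le> k"
  shows "\<exists>B C. B \<in> carrier_mat n k \<and> C \<in> carrier_mat k nc \<and> A = B * C"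
proof -
  have cols: "set (cols A) \<subseteq> carrier_vec n"
    using A cols_dim by blast
  obtain S where S: "maximal S (\<lambda>T. T \<subseteq> set (cols A) \<and> lin_indpt T)"
    using maximal_exists[of "\<lambda>T. T \<subseteq> set (cols A) \<and> lin_indpt T" "card (set (cols A))" "{}"]
    by (meson List.finite_set card_mono empty_iff empty_subsetI finite_lin_indpt2 rev_finite_subset)
  have S_carrier: "S \<subseteq> carrier_vec n" and fin: "finite S"
    using S cols unfolding maximal_def by (auto intro: finite_subset)
  have card: "card S \<le> k"
    using rank_card_indpt[OF A S] rank by simp
  have "\<forall>j. \<exists>a. j < nc \<longrightarrow> lincomb a S = col A j"
    using finite_in_span[OF fin] S_carrier col_in_span_maximal_indpt[OF A S] by auto
  then obtain a where a: "\<And>j. j < nc \<Longrightarrow> lincomb (a j) S = col A j"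
    by metis
  obtain g where g: "bij_betw g {0..<card S} S"
    using ex_bij_betw_nat_finite[OF fin] by blast
  define B where "B = mat n k (\<lambda>(i, l). if l < card S then g l $ i else 0)"
  define C where "C = mat k nc (\<lambda>(l, j). if l < card S then a j (g l) else 0)"
  have "A $$ (i, j) = (B * C) $$ (i, j)" if ij: "i < n" "j < nc" for i j
  proof -
    have "A $$ (i, j) = lincomb (a j) S $ i"
      using a ij A by simp
    also have "\<dots> = (\<Sum>v\<in>S. a j v * v $ i)"
      using lincomb_index[OF ij(1) S_carrier] .
    also have "\<dots> = (\<Sum>l\<in>{0..<card S}. g l $ i * a j (g l))"
      using sum.reindex_bij_betw[OF g, of "\<lambda>v. a j v * v $ i"] by (simp add: mult.commute)
    also have "\<dots> = (\<Sum>l\<in>{0..<k}. B $$ (i, l) * C $$ (l, j))"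
      using card ij by (intro sum.mono_neutral_cong_left) (auto simp: B_def C_def)
    also have "\<dots> = (B * C) $$ (i, j)"
      using ij by (simp add: B_def C_def scalar_prod_def)
    finally show ?thesis .
  qed
  then have "A = B * C"
    using A by (intro eq_matI) (auto simp: B_def C_def)
  moreover have "B \<in> carrier_mat n k" "C \<in> carrier_mat k nc"
    by (simp_all add: B_def C_def)
  ultimately show ?thesis
    by blast
qed

lemma mult_add_less_mult:
  fixes i l n k :: nat
  assumes "i < n" "l < k"
  shows "i * k + l < n * k"
proof -
  have "i * k + l < Suc i * k"
    using assms(2) by simp
  also have "\<dots> \<le> n * k"
    using assms(1) by (intro mult_right_mono) auto
  finally show ?thesis .
qed

lemma mult_add_eq_mult_add_iff:
  fixes a b i j n :: nat
  assumes "b < n" "j < n"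
  shows "a * n + b = i * n + j \<longleftrightarrow> a = i \<and> b = j"
proof
  assume eq: "a * n + b = i * n + j"
  have "a = i"
    using arg_cong[OF eq, of "\<lambda>u. u div n"] assms by simp
  moreover have "b = j"
    using arg_cong[OF eq, of "\<lambda>u. u mod n"] assms by simp
  ultimately show "a = i \<and> b = j" ..
qed simp

lemma sparse_mat_eq_lagrange_sum:
  fixes S :: "'a::field mat"
  assumes e: "inj_on e {..<n * n}"
    and sparse: "card {(i, j). i < n \<and> j < n \<and> S $$ (i, j) \<noteq> 0} \<le> s"
  shows "\<exists>pos val. \<forall>i<n. \<forall>j<n.
           S $$ (i, j) = (\<Sum>t<s. val t * lagrange_basis e (n * n) (i * n + j) (pos t))"
proof -
  define Z where "Z = {(i, j). i < n \<and> j < n \<and> S $$ (i, j) \<noteq> 0}"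
  have fin: "finite Z"
    unfolding Z_def by (rule finite_subset[of _ "{..<n} \<times> {..<n}"]) auto
  obtain z where z: "bij_betw z {0..<card Z} Z"
    using ex_bij_betw_nat_finite[OF fin] by blast
  define pos where "pos t = e (fst (z t) * n + snd (z t))" for t
  define val where "val t = (if t < card Z then S $$ z t else 0)" for t
  have "S $$ (i, j) = (\<Sum>t<s. val t * lagrange_basis e (n * n) (i * n + j) (pos t))"
    if ij: "i < n" "j < n" for i j
  proof -
    let ?L = "lagrange_basis e (n * n) (i * n + j)"
    have node: "?L (pos t) = (if z t = (i, j) then 1 else 0)" if "t < card Z" for t
    proof -
      have "z t \<in> Z"
        using bij_betw_apply[OF z] that by simp
      then obtain a b where ab: "z t = (a, b)" "a < n" "b < n"
        unfolding Z_def by blast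
      then show ?thesis
        using lagrange_basis_node[OF e] mult_add_less_mult mult_add_eq_mult_add_iff ij
        unfolding pos_def by auto
    qed
    have "(\<Sum>t<s. val t * ?L (pos t)) = (\<Sum>t\<in>{0..<card Z}. val t * ?L (pos t))"
      using sparse by (intro sum.mono_neutral_cong_right) (auto simp: val_def Z_def)
    also have "\<dots> = (\<Sum>t\<in>{0..<card Z}. if z t = (i, j) then S $$ z t else 0)"
      by (intro sum.cong) (auto simp: val_def node)
    also have "\<dots> = (\<Sum>q\<in>Z. if q = (i, j) then S $$ q else 0)"
      using sum.reindex_bij_betw[OF z, of "\<lambda>q. if q = (i, j) then S $$ q else 0"] by simp
    also have "\<dots> = S $$ (i, j)"
      using fin ij by (auto simp: Z_def)
    finally show ?thesis
      by simp
  qed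
  then show ?thesis
    by blast
qed

(* Layout of the parameter vector x: B row-major in [0, nk), C row-major in [nk, 2nk), the
   positions p_t in [2nk, 2nk + s) and the values v_t in [2nk + s, 2nk + 2s). *)
definition low_rank_sparse_param :: "nat \<Rightarrow> nat \<Rightarrow> nat \<Rightarrow> (nat \<Rightarrow> 'a::field) \<Rightarrow> 'a vec \<Rightarrow> 'a mat" where
  "low_rank_sparse_param n k s e x = mat n n (\<lambda>(i, j).
     (\<Sum>l<k. x $ (i * k + l) * x $ (n * k + (l * n + j))) +
     (\<Sum>t<s. x $ (2 * n * k + s + t) * lagrange_basis e (n * n) (i * n + j) (x $ (2 * n * k + t))))"

lemma is_poly_fun_low_rank_sparse_param:
  assumes m: "2 * n * k + 2 * s \<le> m" and k: "2 * k \<le> n" and ij: "i < n" "j < n"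
  shows "is_poly_fun m (n * n) (\<lambda>x. low_rank_sparse_param n k s e x $$ (i, j))"
proof -
  have "is_poly_fun m (n * n) (\<lambda>x. x $ (i * k + l) * x $ (n * k + (l * n + j)))" if l: "l < k" for l
  proof -
    have "2 \<le> n * n"
      using k l le_square[of n] by linarith
    have "i * k + l < m" "n * k + (l * n + j) < m"
      using mult_add_less_mult[OF ij(1) l] mult_add_less_mult[OF l ij(2)] m
      by (auto simp: mult.commute)
    then have "is_poly_fun m (1 + 1) (\<lambda>x. x $ (i * k + l) * x $ (n * k + (l * n + j)))"
      by (intro is_poly_fun_mult is_poly_fun_coord) auto
    then show ?thesis
      by (rule is_poly_fun_mono) (use \<open>2 \<le> n * n\<close> in simp)
  qed
  moreover have "is_poly_fun m (n * n)
      (\<lambda>x. x $ (2 * n * k + s + t) * lagrange_basis e (n * n) (i * n + j) (x $ (2 * n * k + t)))"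
    if "t < s" for t
  proof -
    have "is_poly_fun m (1 + (n * n - 1))
        (\<lambda>x. x $ (2 * n * k + s + t) * lagrange_basis e (n * n) (i * n + j) (x $ (2 * n * k + t)))"
      using m that mult_add_less_mult[OF ij]
      by (intro is_poly_fun_mult is_poly_fun_coord is_poly_fun_lagrange_basis) auto
    then show ?thesis
      using ij by simp
  qed
  ultimately have "is_poly_fun m (n * n) (\<lambda>x.
      (\<Sum>l<k. x $ (i * k + l) * x $ (n * k + (l * n + j))) +
      (\<Sum>t<s. x $ (2 * n * k + s + t) * lagrange_basis e (n * n) (i * n + j) (x $ (2 * n * k + t))))"
    by (intro is_poly_fun_add is_poly_fun_sum) auto
  then show ?thesis
    using ij by (simp add: low_rank_sparse_param_def)
qed

lemma low_rank_sparse_param_onto: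
  assumes m: "2 * n * k + 2 * s \<le> m"
    and B: "B \<in> carrier_mat n k" and C: "C \<in> carrier_mat k n" and S: "S \<in> carrier_mat n n"
    and S_eq: "\<forall>i<n. \<forall>j<n. S $$ (i, j) = (\<Sum>t<s. val t * lagrange_basis e (n * n) (i * n + j) (pos t))"
  shows "\<exists>x\<in>carrier_vec m. low_rank_sparse_param n k s e x = B * C + S"
proof -
  define x where "x = vec m (\<lambda>p.
      if p < n * k then B $$ (p div k, p mod k)
      else if p < 2 * n * k then C $$ ((p - n * k) div n, (p - n * k) mod n)
      else if p < 2 * n * k + s then pos (p - 2 * n * k)
      else val (p - 2 * n * k - s))"
  have low_rank: "(\<Sum>l<k. x $ (i * k + l) * x $ (n * k + (l * n + j))) = (B * C) $$ (i, j)"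
    if ij: "i < n" "j < n" for i j
  proof -
    have "x $ (i * k + l) * x $ (n * k + (l * n + j)) = B $$ (i, l) * C $$ (l, j)" if l: "l < k" for l
      using mult_add_less_mult[OF ij(1) l] mult_add_less_mult[OF l ij(2)] m l ij
      by (simp add: x_def algebra_simps)
    then show ?thesis
      using B C ij by (simp add: scalar_prod_def atLeast0LessThan)
  qed
  have sparse: "(\<Sum>t<s. x $ (2 * n * k + s + t) * lagrange_basis e (n * n) (i * n + j) (x $ (2 * n * k + t)))
      = S $$ (i, j)" if ij: "i < n" "j < n" for i j
    using S_eq ij m by (auto simp: x_def intro!: sum.cong)
  have "low_rank_sparse_param n k s e x = B * C + S"
    using B C S low_rank sparse by (intro eq_matI) (auto simp: low_rank_sparse_param_def)
  then show ?thesis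
    unfolding x_def by auto
qed

definition poly_parametrizable :: "nat \<Rightarrow> nat \<Rightarrow> nat \<Rightarrow> 'a::comm_ring_1 mat set \<Rightarrow> bool" where
  "poly_parametrizable m d n A \<longleftrightarrow>
     (\<exists>P. (\<forall>x\<in>carrier_vec m. P x \<in> carrier_mat n n) \<and>
          (\<forall>i<n. \<forall>j<n. is_poly_fun m d (\<lambda>x. P x $$ (i, j))) \<and>
          A \<subseteq> P ` carrier_vec m)"

lemma poly_parametrizable_subset:
  "poly_parametrizable m d n B \<Longrightarrow> A \<subseteq> B \<Longrightarrow> poly_parametrizable m d n A"
  unfolding poly_parametrizable_def by blast

lemma poly_parametrizable_carrier_mat:
  assumes m: "n * n \<le> m" and d: "1 \<le> d \<or> n = 0"
  shows "poly_parametrizable m d n (carrier_mat n n :: 'a::comm_ring_1 mat set)"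
proof -
  define P where "P x = mat n n (\<lambda>(i, j). x $ (i * n + j))" for x :: "'a vec"
  have idx: "i * n + j < m" if "i < n" "j < n" for i j
    using mult_add_less_mult[OF that] m by linarith
  have "M \<in> P ` carrier_vec m" if M: "M \<in> carrier_mat n n" for M
  proof -
    define x where "x = vec m (\<lambda>p. M $$ (p div n, p mod n))"
    have "P x $$ (i, j) = M $$ (i, j)" if "i < n" "j < n" for i j
      using idx[OF that] that by (simp add: P_def x_def)
    then have "P x = M"
      using M by (intro eq_matI) (simp_all add: P_def)
    moreover have "x \<in> carrier_vec m"
      by (simp add: x_def)
    ultimately show ?thesis
      by blast
  qed
  moreover have "is_poly_fun m d (\<lambda>x. P x $$ (i, j))" if "i < n" "j < n" for i j
  proof -
    have "is_poly_fun m d (\<lambda>x. x $ (i * n + j))"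
      using idx[OF that] d that by (intro is_poly_fun_coord) auto
    then show ?thesis
      using that by (simp add: P_def)
  qed
  moreover have "P x \<in> carrier_mat n n" for x
    by (simp add: P_def)
  ultimately show ?thesis
    unfolding poly_parametrizable_def by blast
qed

definition low_rank_plus_sparse :: "nat \<Rightarrow> nat \<Rightarrow> nat \<Rightarrow> 'a::field mat set" where
  "low_rank_plus_sparse n k s =
     {R + S | R S. R \<in> carrier_mat n n \<and> S \<in> carrier_mat n n \<and> vec_space.rank n R \<le> k \<and>
        card {(i, j). i < n \<and> j < n \<and> S $$ (i, j) \<noteq> 0} \<le> s}"

lemma not_rigid_imp_low_rank_plus_sparse:
  assumes "\<not> rigid n r s M"
  shows "M \<in> low_rank_plus_sparse n (nat \<lfloor>r\<rfloor>) (nat \<lfloor>s\<rfloor>)"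
proof -
  obtain R S where RS: "R \<in> carrier_mat n n" "S \<in> carrier_mat n n" "M = R + S"
    "real (vec_space.rank n R) \<le> r" "real (card {(i, j). i < n \<and> j < n \<and> S $$ (i, j) \<noteq> 0}) \<le> s"
    using assms unfolding rigid_def by blast
  then have "vec_space.rank n R \<le> nat \<lfloor>r\<rfloor>" "card {(i, j). i < n \<and> j < n \<and> S $$ (i, j) \<noteq> 0} \<le> nat \<lfloor>s\<rfloor>"
    by (simp_all add: le_nat_floor)
  with RS show ?thesis
    unfolding low_rank_plus_sparse_def by blast
qed

lemma poly_parametrizable_low_rank_plus_sparse:
  fixes e :: "nat \<Rightarrow> 'a::field"
  assumes m: "2 * n * k + 2 * s \<le> m" and k: "2 * k \<le> n" and e: "inj_on e {..<n * n}"
  shows "poly_parametrizable m (n * n) n (low_rank_plus_sparse n k s :: 'a mat set)"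
proof -
  have "M \<in> low_rank_sparse_param n k s e ` carrier_vec m" if "M \<in> low_rank_plus_sparse n k s" for M
  proof -
    obtain R S where RS: "M = R + S" "R \<in> carrier_mat n n" "S \<in> carrier_mat n n"
      "vec_space.rank n R \<le> k" "card {(i, j). i < n \<and> j < n \<and> S $$ (i, j) \<noteq> 0} \<le> s"
      using \<open>M \<in> low_rank_plus_sparse n k s\<close> unfolding low_rank_plus_sparse_def by blast
    obtain B C where BC: "B \<in> carrier_mat n k" "C \<in> carrier_mat k n" "R = B * C"
      using vec_space.rank_factorization[OF RS(2,4)] by blast
    obtain pos val where
      "\<forall>i<n. \<forall>j<n. S $$ (i, j) = (\<Sum>t<s. val t * lagrange_basis e (n * n) (i * n + j) (pos t))"
      using sparse_mat_eq_lagrange_sum[OF e RS(5)] by blast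
    then obtain x where "x \<in> carrier_vec m" "low_rank_sparse_param n k s e x = M"
      using low_rank_sparse_param_onto[OF m BC(1,2) RS(3)] unfolding RS(1) BC(3) by blast
    then show ?thesis
      by (metis image_eqI)
  qed
  moreover have "low_rank_sparse_param n k s e x \<in> carrier_mat n n" for x
    by (simp add: low_rank_sparse_param_def)
  ultimately show ?thesis
    unfolding poly_parametrizable_def using is_poly_fun_low_rank_sparse_param[OF m k]
    by (intro exI[of _ "low_rank_sparse_param n k s e"]) blast
qed

lemma nat_floor_parameter_count_le:
  fixes \<epsilon> :: real
  assumes "0 \<le> \<epsilon>"
  shows "2 * n * nat \<lfloor>\<epsilon> * real n\<rfloor> + 2 * nat \<lfloor>\<epsilon> * real n ^ 2\<rfloor> \<le> nat \<lfloor>4 * \<epsilon> * real n ^ 2\<rfloor>"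
proof (rule le_nat_floor)
  have "real n * real (nat \<lfloor>\<epsilon> * real n\<rfloor>) \<le> real n * (\<epsilon> * real n)"
    using assms by (intro mult_left_mono of_nat_floor) auto
  moreover have "real (nat \<lfloor>\<epsilon> * real n ^ 2\<rfloor>) \<le> \<epsilon> * real n ^ 2"
    using assms by (intro of_nat_floor) auto
  ultimately show "real (2 * n * nat \<lfloor>\<epsilon> * real n\<rfloor> + 2 * nat \<lfloor>\<epsilon> * real n ^ 2\<rfloor>) \<le> 4 * \<epsilon> * real n ^ 2"
    by (simp add: power2_eq_square algebra_simps)
qed

lemma poly_parametrizable_not_rigid:
  fixes \<epsilon> :: real
  assumes "0 < \<epsilon>" and "infinite (UNIV :: 'a set) \<or> n * n \<le> card (UNIV :: 'a set)"
  shows "poly_parametrizable (nat \<lfloor>4 * \<epsilon> * real n ^ 2\<rfloor>) (n * n) n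
           {M :: 'a::field mat. M \<in> carrier_mat n n \<and> \<not> rigid n (\<epsilon> * real n) (\<epsilon> * real n ^ 2) M}"
    (is "poly_parametrizable ?m _ _ ?non_rigid")
proof (cases "1 \<le> 4 * \<epsilon>")
  case True
  then have "1 * real n ^ 2 \<le> 4 * \<epsilon> * real n ^ 2"
    by (intro mult_right_mono) auto
  then have "n * n \<le> ?m"
    by (intro le_nat_floor) (simp add: power2_eq_square)
  then show ?thesis
    by (rule poly_parametrizable_subset[OF poly_parametrizable_carrier_mat]) auto
next
  case False
  define k where "k = nat \<lfloor>\<epsilon> * real n\<rfloor>"
  define s where "s = nat \<lfloor>\<epsilon> * real n ^ 2\<rfloor>"
  have "real k \<le> \<epsilon> * real n"
    unfolding k_def using assms(1) by (intro of_nat_floor) simp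
  moreover have "\<epsilon> * real n \<le> (1 / 4) * real n"
    using False by (intro mult_right_mono) auto
  ultimately have "real (2 * k) \<le> real n"
    by simp
  then have "2 * k \<le> n"
    by (simp only: of_nat_le_iff)
  moreover have "2 * n * k + 2 * s \<le> ?m"
    unfolding k_def s_def using assms(1) by (intro nat_floor_parameter_count_le) simp
  moreover obtain e :: "nat \<Rightarrow> 'a" where "inj_on e {..<n * n}"
    using ex_inj_on_lessThan assms(2) by blast
  moreover have "?non_rigid \<subseteq> low_rank_plus_sparse n k s"
    unfolding k_def s_def using not_rigid_imp_low_rank_plus_sparse by blast
  ultimately show ?thesis
    by (intro poly_parametrizable_subset[OF poly_parametrizable_low_rank_plus_sparse])
qed

theorem lemma2p2:
  fixes \<epsilon> :: real and n :: nat
  assumes "\<epsilon> > 0"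
    and "infinite (UNIV :: 'a::field set) \<or> n ^ 2 \<le> card (UNIV :: 'a set)"
  shows "\<exists>P :: 'a vec \<Rightarrow> 'a mat.
           (\<forall>x\<in>carrier_vec (nat \<lfloor>4 * \<epsilon> * real n ^ 2\<rfloor>). P x \<in> carrier_mat n n) \<and>
           (\<forall>i<n. \<forall>j<n. is_poly_fun (nat \<lfloor>4 * \<epsilon> * real n ^ 2\<rfloor>) (n ^ 2) (\<lambda>x. P x $$ (i, j))) \<and>
           (\<forall>M\<in>carrier_mat n n. \<not> rigid n (\<epsilon> * real n) (\<epsilon> * real n ^ 2) M \<longrightarrow>
              (\<exists>x\<in>carrier_vec (nat \<lfloor>4 * \<epsilon> * real n ^ 2\<rfloor>). P x = M))"
proof -
  obtain P :: "'a vec \<Rightarrow> 'a mat" where P: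
      "\<forall>x\<in>carrier_vec (nat \<lfloor>4 * \<epsilon> * real n ^ 2\<rfloor>). P x \<in> carrier_mat n n"
      "\<forall>i<n. \<forall>j<n. is_poly_fun (nat \<lfloor>4 * \<epsilon> * real n ^ 2\<rfloor>) (n ^ 2) (\<lambda>x. P x $$ (i, j))"
      "{M. M \<in> carrier_mat n n \<and> \<not> rigid n (\<epsilon> * real n) (\<epsilon> * real n ^ 2) M}
         \<subseteq> P ` carrier_vec (nat \<lfloor>4 * \<epsilon> * real n ^ 2\<rfloor>)"
    using poly_parametrizable_not_rigid[OF assms(1), of n] assms(2)
    unfolding poly_parametrizable_def power2_eq_square by blast
  show ?thesis
  proof (intro exI[of _ P] conjI ballI impI)
    fix M :: "'a mat"
    assume "M \<in> carrier_mat n n" "\<not> rigid n (\<epsilon> * real n) (\<epsilon> * real n ^ 2) M"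
    then have "M \<in> P ` carrier_vec (nat \<lfloor>4 * \<epsilon> * real n ^ 2\<rfloor>)"
      using P(3) by blast
    then show "\<exists>x\<in>carrier_vec (nat \<lfloor>4 * \<epsilon> * real n ^ 2\<rfloor>). P x = M"
      by (metis imageE)
  qed (use P in auto)
qed

end
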